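(* Let $n\ge 2$ and $m\ge 1$, let $(\mathbb{R}^n,g_0)$ be Euclidean space with coordinates $x=(x_1,\dots,x_n)$ and metric components $(g_0)_{ij}=\delta_{ij}$, and let $(F^m,g_F)$ be a Riemannian manifold of dimension $m$. Let $f,h:\mathbb{R}^n\to\mathbb{R}$ be smooth functions with $f>0$, and consider the warped product $M=\mathbb{R}^n\times_f F^m$ with metric $g=g_0\oplus f^2 g_F$. If $(M,g)$ is a gradient Ricci soliton with potential function $h$ (that is, $\mathrm{Ric}_g+\mathrm{Hess}_g(h)=\rho g$ for some constant $\rho\in\mathbb{R}$), then the warping function $f$ is invariant by translation, i.e. there exist constants $a_i,b_i\in\mathbb{R}$ and a function $P$ of class at least $C^1$ such that $$f(x_1,\dots,x_n)=P\Big(\sum_{i=1}^n (a_i x_i+b_i)\Big).$$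
   Context: A warped product $B\times_f F$ is the product manifold $B\times F$ with metric $g_B\oplus f^2 g_F$, where $f:B\to\mathbb{R}$ is positive. Functions on $\mathbb{R}^n$ (such as $f$ and $h$) are identified with their lifts to $M$ via the projection onto the first factor. $\mathrm{Ric}_g$ denotes the Ricci tensor and $\mathrm{Hess}_g(h)$ the Hessian of $h$ with respect to $g$. *)

theory Defs
  imports "HOL-Analysis.Analysis"
begin

definition pd :: "'i::finite \<Rightarrow> (real^'i \<Rightarrow> real) \<Rightarrow> real^'i \<Rightarrow> real" where
  "pd k \<phi> x = deriv (\<lambda>t. \<phi> (x + t *\<^sub>R axis k 1)) 0"

fun Ck_on :: "nat \<Rightarrow> (real^'i::finite) set \<Rightarrow> (real^'i \<Rightarrow> real) \<Rightarrow> bool" where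
  "Ck_on 0 S \<phi> = continuous_on S \<phi>"
| "Ck_on (Suc k) S \<phi> = ((\<forall>x\<in>S. \<phi> differentiable (at x)) \<and> (\<forall>i. Ck_on k S (pd i \<phi>)))"

definition smooth_on :: "(real^'i::finite) set \<Rightarrow> (real^'i \<Rightarrow> real) \<Rightarrow> bool" where
  "smooth_on S \<phi> = (\<forall>k. Ck_on k S \<phi>)"

definition riemannian_metric_on :: "(real^'i::finite) set \<Rightarrow> (real^'i \<Rightarrow> real^'i^'i) \<Rightarrow> bool" where
  "riemannian_metric_on U g \<longleftrightarrow>
     (\<forall>i j. smooth_on U (\<lambda>p. g p $ i $ j)) \<and>
     (\<forall>p\<in>U. \<forall>i j. g p $ i $ j = g p $ j $ i) \<and>
     (\<forall>p\<in>U. \<forall>v. v \<noteq> 0 \<longrightarrow> v \<bullet> (g p *v v) > 0)"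

definition ginv :: "(real^'i::finite \<Rightarrow> real^'i^'i) \<Rightarrow> real^'i \<Rightarrow> real^'i^'i" where
  "ginv g p = matrix_inv (g p)"

definition christoffel :: "(real^'i::finite \<Rightarrow> real^'i^'i) \<Rightarrow> 'i \<Rightarrow> 'i \<Rightarrow> 'i \<Rightarrow> real^'i \<Rightarrow> real" where
  "christoffel g k i j p = (1/2) * (\<Sum>l\<in>UNIV. ginv g p $ k $ l *
      (pd i (\<lambda>q. g q $ j $ l) p + pd j (\<lambda>q. g q $ i $ l) p - pd l (\<lambda>q. g q $ i $ j) p))"

definition ricci :: "(real^'i::finite \<Rightarrow> real^'i^'i) \<Rightarrow> 'i \<Rightarrow> 'i \<Rightarrow> real^'i \<Rightarrow> real" where
  "ricci g i j p = (\<Sum>k\<in>UNIV.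
      pd k (christoffel g k i j) p - pd j (christoffel g k i k) p
      + (\<Sum>l\<in>UNIV. christoffel g k k l p * christoffel g l i j p
                  - christoffel g k j l p * christoffel g l i k p))"

definition hessian :: "(real^'i::finite \<Rightarrow> real^'i^'i) \<Rightarrow> (real^'i \<Rightarrow> real) \<Rightarrow> 'i \<Rightarrow> 'i \<Rightarrow> real^'i \<Rightarrow> real" where
  "hessian g h i j p = pd i (pd j h) p - (\<Sum>k\<in>UNIV. christoffel g k i j p * pd k h p)"

definition gradient_ricci_soliton_on ::
  "(real^'i::finite) set \<Rightarrow> (real^'i \<Rightarrow> real^'i^'i) \<Rightarrow> (real^'i \<Rightarrow> real) \<Rightarrow> real \<Rightarrow> bool" where
  "gradient_ricci_soliton_on S g h \<rho> \<longleftrightarrow>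
     (\<forall>p\<in>S. \<forall>i j. ricci g i j p + hessian g h i j p = \<rho> * g p $ i $ j)"

section \<open>Warped product R^n x_f F^m (F given by a chart U in R^m with metric gF)\<close>

definition base_pt :: "real^('n::finite + 'm::finite) \<Rightarrow> real^'n" where
  "base_pt p = (\<chi> i. p $ Inl i)"

definition fiber_pt :: "real^('n::finite + 'm::finite) \<Rightarrow> real^'m" where
  "fiber_pt p = (\<chi> j. p $ Inr j)"

definition warped_metric ::
  "(real^'n::finite \<Rightarrow> real) \<Rightarrow> (real^'m::finite \<Rightarrow> real^'m^'m) \<Rightarrow> real^('n + 'm) \<Rightarrow> real^('n+'m)^('n+'m)" where
  "warped_metric f gF p = (\<chi> a b. case (a, b) of
       (Inl i, Inl j) \<Rightarrow> (if i = j then 1 else 0)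
     | (Inr k, Inr l) \<Rightarrow> (f (base_pt p))\<^sup>2 * gF (fiber_pt p) $ k $ l
     | _ \<Rightarrow> 0)"

end

theory Submission
  imports Defs
begin

text \<open>
  Write \<open>\<phi> = ln f\<close> and \<open>m = dim F\<close>. For horizontal indices the soliton equation reads
  \<open>\<partial>\<^sub>i\<partial>\<^sub>j h - m (\<partial>\<^sub>i\<partial>\<^sub>j \<phi> + \<partial>\<^sub>i\<phi> \<partial>\<^sub>j\<phi>) = \<rho> \<delta>\<^sub>i\<^sub>j\<close>. Differentiating once more and using
  the symmetry of third derivatives of \<open>h\<close> and \<open>\<phi>\<close> gives
  \<open>\<partial>\<^sub>k\<partial>\<^sub>i\<phi> \<partial>\<^sub>j\<phi> = \<partial>\<^sub>j\<partial>\<^sub>i\<phi> \<partial>\<^sub>k\<phi>\<close>: every row of the Hessian of \<open>\<phi>\<close> is a multiple of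
  \<open>\<nabla>\<phi>\<close>. Hence, on a line \<open>x + s w\<close> with \<open>w \<bottom> \<nabla>\<phi>(x) \<noteq> 0\<close>, the squared cosine of the
  angle between \<open>\<nabla>\<phi>\<close> and \<open>w\<close> has zero derivative as long as \<open>\<nabla>\<phi> \<noteq> 0\<close>; so it stays \<open>0\<close>,
  and then \<open>\<nabla>\<phi>\<close> itself is constant on the whole line. Two such lines through points with
  non-parallel gradients would meet, so all values of \<open>\<nabla>\<phi>\<close>, and of \<open>\<nabla>f = f \<nabla>\<phi>\<close>, are
  parallel to one vector \<open>\<nu>\<close>, and \<open>f(x)\<close> depends only on \<open>\<nu> \<bullet> x\<close>.
\<close>

section \<open>Partial derivatives\<close>

lemma has_real_derivative_along_line:
  fixes \<phi> :: "real^'i::finite \<Rightarrow> real"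
  assumes "(\<phi> has_derivative D) (at (x + s *\<^sub>R d))"
  shows "((\<lambda>t. \<phi> (x + t *\<^sub>R d)) has_real_derivative D d) (at s)"
proof -
  have "((\<lambda>t. x + t *\<^sub>R d) has_derivative (\<lambda>t. t *\<^sub>R d)) (at s)"
    by (auto intro!: derivative_eq_intros)
  from has_derivative_compose[OF this assms]
  have "((\<lambda>t. \<phi> (x + t *\<^sub>R d)) has_derivative (\<lambda>t. D (t *\<^sub>R d))) (at s)"
    by (simp add: o_def)
  moreover have "(\<lambda>t. D (t *\<^sub>R d)) = (*) (D d)"
    using has_derivative_linear[OF assms] by (auto simp: linear_scale fun_eq_iff)
  ultimately show ?thesis by (simp add: has_field_derivative_def)
qed

lemma pd_eq_derivative:
  fixes \<phi> :: "real^'i::finite \<Rightarrow> real"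
  assumes "(\<phi> has_derivative D) (at x)"
  shows "pd k \<phi> x = D (axis k 1)"
  unfolding pd_def
  by (rule DERIV_imp_deriv) (use has_real_derivative_along_line[of \<phi> D x 0] assms in simp)

lemma linear_eq_sum_axis:
  fixes D :: "real^'i::finite \<Rightarrow> real"
  assumes "linear D"
  shows "D d = (\<Sum>k\<in>UNIV. d$k * D (axis k 1))"
proof -
  have "D d = D (\<Sum>k\<in>UNIV. d$k *\<^sub>R axis k 1)"
    using basis_expansion[of d] by (simp add: scalar_mult_eq_scaleR)
  also have "\<dots> = (\<Sum>k\<in>UNIV. d$k * D (axis k 1))"
    using assms by (simp add: linear_sum linear_scale)
  finally show ?thesis .
qed

lemma pd_line_derivative:
  fixes \<phi> :: "real^'i::finite \<Rightarrow> real"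
  assumes "\<phi> differentiable (at (x + s *\<^sub>R d))"
  shows "((\<lambda>t. \<phi> (x + t *\<^sub>R d)) has_real_derivative (\<Sum>k\<in>UNIV. d$k * pd k \<phi> (x + s *\<^sub>R d))) (at s)"
proof -
  obtain D where D: "(\<phi> has_derivative D) (at (x + s *\<^sub>R d))"
    using assms unfolding differentiable_def by blast
  have "D d = (\<Sum>k\<in>UNIV. d$k * pd k \<phi> (x + s *\<^sub>R d))"
    using linear_eq_sum_axis[OF has_derivative_linear[OF D], of d] by (simp add: pd_eq_derivative[OF D])
  with has_real_derivative_along_line[OF D] show ?thesis by simp
qed

lemma pd_axis_line_derivative:
  fixes \<phi> :: "real^'i::finite \<Rightarrow> real"
  assumes "\<phi> differentiable (at (x + s *\<^sub>R axis k 1))"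
  shows "((\<lambda>t. \<phi> (x + t *\<^sub>R axis k 1)) has_real_derivative pd k \<phi> (x + s *\<^sub>R axis k 1)) (at s)"
  using pd_line_derivative[OF assms] by (simp add: axis_def mult_delta_left)

lemma pd_cong_line:
  assumes "\<And>t. \<phi> (x + t *\<^sub>R axis k 1) = \<psi> (x + t *\<^sub>R axis k 1)"
  shows "pd k \<phi> x = pd k \<psi> x"
  unfolding pd_def using assms by simp

lemma pd_const [simp]: "pd k (\<lambda>x. c) = (\<lambda>x. 0)"
  unfolding pd_def by (simp add: DERIV_imp_deriv)

lemma pd_add:
  assumes "a differentiable (at x)" "b differentiable (at x)"
  shows "pd k (\<lambda>x. a x + b x) x = pd k a x + pd k b x"
proof -
  obtain Da Db where "(a has_derivative Da) (at x)" "(b has_derivative Db) (at x)"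
    using assms unfolding differentiable_def by blast
  with pd_eq_derivative[OF has_derivative_add[OF this]] show ?thesis
    by (simp add: pd_eq_derivative)
qed

lemma pd_mult:
  assumes "a differentiable (at x)" "b differentiable (at x)"
  shows "pd k (\<lambda>x. a x * b x) x = a x * pd k b x + pd k a x * b x"
proof -
  obtain Da Db where "(a has_derivative Da) (at x)" "(b has_derivative Db) (at x)"
    using assms unfolding differentiable_def by blast
  with pd_eq_derivative[OF has_derivative_mult[OF this]] show ?thesis
    by (simp add: pd_eq_derivative)
qed

lemma pd_diff:
  assumes "a differentiable (at x)" "b differentiable (at x)"
  shows "pd k (\<lambda>x. a x - b x) x = pd k a x - pd k b x"
proof -
  obtain Da Db where "(a has_derivative Da) (at x)" "(b has_derivative Db) (at x)"
    using assms unfolding differentiable_def by blast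
  with pd_eq_derivative[OF has_derivative_diff[OF this]] show ?thesis
    by (simp add: pd_eq_derivative)
qed

lemma pd_cmult:
  assumes "a differentiable (at x)"
  shows "pd k (\<lambda>x. c * a x) x = c * pd k a x"
  using pd_mult[OF differentiable_const assms] by simp

lemma pd_inverse:
  fixes a :: "real^'i::finite \<Rightarrow> real"
  assumes "a differentiable (at x)" "a x \<noteq> 0"
  shows "pd k (\<lambda>x. inverse (a x)) x = - (pd k a x * inverse (a x) * inverse (a x))"
proof -
  obtain Da where Da: "(a has_derivative Da) (at x)"
    using assms unfolding differentiable_def by blast
  have "pd k (\<lambda>x. inverse (a x)) x = - (inverse (a x) * Da (axis k 1) * inverse (a x))"
    using pd_eq_derivative[OF Deriv.has_derivative_inverse[OF assms(2) Da]] .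
  then show ?thesis
    by (simp add: pd_eq_derivative[OF Da])
qed

lemma pd_ln:
  fixes a :: "real^'i::finite \<Rightarrow> real"
  assumes "a differentiable (at x)" "a x > 0"
  shows "pd k (\<lambda>x. ln (a x)) x = pd k a x * inverse (a x)"
proof -
  obtain Da where "(a has_derivative Da) (at x)"
    using assms unfolding differentiable_def by blast
  with pd_eq_derivative[OF has_derivative_ln[of a x, OF assms(2) this]] show ?thesis
    by (simp add: pd_eq_derivative)
qed

lemma Ck_Suc_imp_Ck: "Ck_on (Suc k) UNIV \<phi> \<Longrightarrow> Ck_on k UNIV \<phi>"
proof (induction k arbitrary: \<phi>)
  case 0
  then show ?case
    by (simp add: differentiable_at_imp_differentiable_on differentiable_imp_continuous_on)
qed auto

lemma Ck_add: "Ck_on k UNIV a \<Longrightarrow> Ck_on k UNIV b \<Longrightarrow> Ck_on k UNIV (\<lambda>x. a x + b x)"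
proof (induction k arbitrary: a b)
  case (Suc k)
  have "pd i (\<lambda>x. a x + b x) = (\<lambda>x. pd i a x + pd i b x)" for i
    using Suc.prems by (auto simp: fun_eq_iff intro!: pd_add)
  with Suc show ?case by auto
qed (auto intro!: continuous_intros)

lemma Ck_mult: "Ck_on k UNIV a \<Longrightarrow> Ck_on k UNIV b \<Longrightarrow> Ck_on k UNIV (\<lambda>x. a x * b x)"
proof (induction k arbitrary: a b)
  case (Suc k)
  have "pd i (\<lambda>x. a x * b x) = (\<lambda>x. a x * pd i b x + pd i a x * b x)" for i
    using Suc.prems by (auto simp: fun_eq_iff intro!: pd_mult)
  moreover have "Ck_on k UNIV a" "Ck_on k UNIV b"
    using Suc.prems Ck_Suc_imp_Ck by blast+
  ultimately show ?case
    using Suc by (auto intro!: Ck_add)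
qed (auto intro!: continuous_intros)

lemma Ck_const: "Ck_on k UNIV (\<lambda>x. c)"
  by (induction k arbitrary: c) simp_all

lemma Ck_inverse:
  "Ck_on k UNIV a \<Longrightarrow> (\<And>x. a x \<noteq> 0) \<Longrightarrow> Ck_on k UNIV (\<lambda>x. inverse (a x))"
proof (induction k arbitrary: a)
  case (Suc k)
  have "pd i (\<lambda>x. inverse (a x)) = (\<lambda>x. (-1) * (pd i a x * (inverse (a x) * inverse (a x))))" for i
    using Suc.prems by (auto simp: fun_eq_iff pd_inverse)
  moreover have "Ck_on k UNIV (\<lambda>x. (-1) * (pd i a x * (inverse (a x) * inverse (a x))))" for i
    using Suc Ck_Suc_imp_Ck by (intro Ck_mult Ck_const) auto
  ultimately show ?case
    using Suc.prems by (auto intro!: derivative_intros)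
qed (auto intro!: continuous_intros)

lemma Ck_ln: "Ck_on k UNIV a \<Longrightarrow> (\<And>x. a x > 0) \<Longrightarrow> Ck_on k UNIV (\<lambda>x. ln (a x))"
proof (induction k)
  case (Suc k)
  then have "pd i (\<lambda>x. ln (a x)) = (\<lambda>x. pd i a x * inverse (a x))" for i
    by (auto simp: fun_eq_iff pd_ln)
  moreover have "Ck_on k UNIV (\<lambda>x. pd i a x * inverse (a x))" for i
    using Suc.prems Ck_Suc_imp_Ck by (intro Ck_mult Ck_inverse) (auto simp: less_imp_neq[symmetric])
  moreover have "(\<lambda>x. ln (a x)) differentiable (at x)" for x
  proof -
    have "a differentiable (at x)"
      using Suc.prems(1) by simp
    then obtain Da where "(a has_derivative Da) (at x)"
      unfolding differentiable_def by blast
    with has_derivative_ln[of a x, OF Suc.prems(2)] show ?thesis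
      unfolding differentiable_def by blast
  qed
  ultimately show ?case by simp
qed (auto intro!: continuous_intros simp: less_imp_neq[symmetric])

lemma smooth_on_pd: "smooth_on S \<phi> \<Longrightarrow> smooth_on S (pd i \<phi>)"
  unfolding smooth_on_def by (metis Ck_on.simps(2))

lemma smooth_on_imp_differentiable: "smooth_on S \<phi> \<Longrightarrow> x \<in> S \<Longrightarrow> \<phi> differentiable (at x)"
  unfolding smooth_on_def by (metis Ck_on.simps(2))

lemma smooth_on_imp_continuous_on: "smooth_on S \<phi> \<Longrightarrow> continuous_on S \<phi>"
  unfolding smooth_on_def by (metis Ck_on.simps(1))

lemma smooth_on_ln: "smooth_on UNIV a \<Longrightarrow> (\<And>x. a x > 0) \<Longrightarrow> smooth_on UNIV (\<lambda>x. ln (a x))"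
  unfolding smooth_on_def by (blast intro: Ck_ln)

section \<open>Symmetry of second derivatives\<close>

definition second_difference :: "(real^'i::finite \<Rightarrow> real) \<Rightarrow> real^'i \<Rightarrow> 'i \<Rightarrow> 'i \<Rightarrow> real \<Rightarrow> real \<Rightarrow> real"
  where "second_difference \<phi> x i j s t =
    \<phi> (x + s *\<^sub>R axis i 1 + t *\<^sub>R axis j 1) - \<phi> (x + s *\<^sub>R axis i 1) - \<phi> (x + t *\<^sub>R axis j 1) + \<phi> x"

lemma second_difference_commute: "second_difference \<phi> x i j s t = second_difference \<phi> x j i t s"
  unfolding second_difference_def by (simp add: add_ac)

lemma second_difference_mvt:
  fixes \<phi> :: "real^'i::finite \<Rightarrow> real"
  assumes d\<phi>: "\<And>y. \<phi> differentiable (at y)" and d\<phi>i: "\<And>y. pd i \<phi> differentiable (at y)"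
    and "s > 0" "t > 0"
  shows "\<exists>\<xi>. dist \<xi> x < s + t \<and> second_difference \<phi> x i j s t = s * t * pd j (pd i \<phi>) \<xi>"
proof -
  define a where "a \<sigma> = \<phi> (x + t *\<^sub>R axis j 1 + \<sigma> *\<^sub>R axis i 1) - \<phi> (x + \<sigma> *\<^sub>R axis i 1)" for \<sigma>
  have "DERIV a \<sigma> :> pd i \<phi> (x + t *\<^sub>R axis j 1 + \<sigma> *\<^sub>R axis i 1) - pd i \<phi> (x + \<sigma> *\<^sub>R axis i 1)" for \<sigma>
    unfolding a_def by (intro DERIV_diff pd_axis_line_derivative d\<phi>)
  from MVT2[OF \<open>s > 0\<close> this] obtain \<sigma> where \<sigma>: "0 < \<sigma>" "\<sigma> < s"
    and a: "a s - a 0 = s * (pd i \<phi> (x + \<sigma> *\<^sub>R axis i 1 + t *\<^sub>R axis j 1) - pd i \<phi> (x + \<sigma> *\<^sub>R axis i 1))"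
    by (auto simp: add_ac)
  define b where "b \<tau> = pd i \<phi> (x + \<sigma> *\<^sub>R axis i 1 + \<tau> *\<^sub>R axis j 1)" for \<tau>
  have "DERIV b \<tau> :> pd j (pd i \<phi>) (x + \<sigma> *\<^sub>R axis i 1 + \<tau> *\<^sub>R axis j 1)" for \<tau>
    unfolding b_def by (intro pd_axis_line_derivative d\<phi>i)
  from MVT2[OF \<open>t > 0\<close> this] obtain \<tau> where \<tau>: "0 < \<tau>" "\<tau> < t"
    and b: "b t - b 0 = t * pd j (pd i \<phi>) (x + \<sigma> *\<^sub>R axis i 1 + \<tau> *\<^sub>R axis j 1)"
    by auto
  have "dist (x + \<sigma> *\<^sub>R axis i 1 + \<tau> *\<^sub>R axis j 1) x
      \<le> norm (\<sigma> *\<^sub>R (axis i 1 :: real^'i)) + norm (\<tau> *\<^sub>R (axis j 1 :: real^'i))"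
    by (simp add: dist_norm norm_triangle_ineq del: norm_scaleR)
  also have "\<dots> < s + t"
    using \<sigma> \<tau> by (simp add: norm_axis_1)
  finally have "dist (x + \<sigma> *\<^sub>R axis i 1 + \<tau> *\<^sub>R axis j 1) x < s + t" .
  moreover have "second_difference \<phi> x i j s t = s * t * pd j (pd i \<phi>) (x + \<sigma> *\<^sub>R axis i 1 + \<tau> *\<^sub>R axis j 1)"
    using a b by (simp add: second_difference_def a_def b_def add_ac)
  ultimately show ?thesis by blast
qed

lemma second_difference_quotient_tendsto:
  fixes \<phi> :: "real^'i::finite \<Rightarrow> real"
  assumes "Ck_on 2 UNIV \<phi>"
  shows "((\<lambda>r. second_difference \<phi> x i j r r / (r * r)) \<longlongrightarrow> pd j (pd i \<phi>) x) (at_right 0)"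
proof (rule tendstoI)
  fix e :: real assume "e > 0"
  have d\<phi>: "\<And>y. \<phi> differentiable (at y)" and d\<phi>i: "\<And>y. pd i \<phi> differentiable (at y)"
    and "continuous_on UNIV (pd j (pd i \<phi>))"
    using assms by (simp_all add: numeral_2_eq_2)
  with \<open>e > 0\<close> obtain d where "d > 0"
    and d: "\<And>y. dist y x < d \<Longrightarrow> dist (pd j (pd i \<phi>) y) (pd j (pd i \<phi>) x) < e"
    unfolding continuous_on_iff by blast
  have "dist (second_difference \<phi> x i j r r / (r * r)) (pd j (pd i \<phi>) x) < e"
    if "0 < r" "r < d / 2" for r
  proof -
    obtain \<xi> where "dist \<xi> x < r + r" and "second_difference \<phi> x i j r r = r * r * pd j (pd i \<phi>) \<xi>"
      using second_difference_mvt[OF d\<phi> d\<phi>i \<open>0 < r\<close> \<open>0 < r\<close>] by blast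
    with d[of \<xi>] that show ?thesis by simp
  qed
  then show "\<forall>\<^sub>F r in at_right 0. dist (second_difference \<phi> x i j r r / (r * r)) (pd j (pd i \<phi>) x) < e"
    unfolding eventually_at_right_field using \<open>d > 0\<close> by (intro exI[of _ "d / 2"]) auto
qed

lemma pd_commute:
  fixes \<phi> :: "real^'i::finite \<Rightarrow> real"
  assumes "Ck_on 2 UNIV \<phi>"
  shows "pd i (pd j \<phi>) x = pd j (pd i \<phi>) x"
  using tendsto_unique[OF trivial_limit_at_right_real
      second_difference_quotient_tendsto[OF assms, of x i j]]
      second_difference_quotient_tendsto[OF assms, of x j i]
  by (simp add: second_difference_commute)

lemma smooth_on_pd_commute: "smooth_on UNIV \<phi> \<Longrightarrow> pd i (pd j \<phi>) = pd j (pd i \<phi>)"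
  unfolding smooth_on_def by (simp add: fun_eq_iff pd_commute)

section \<open>The horizontal part of the soliton equation\<close>

lemma sum_UNIV_Plus:
  "sum g (UNIV::('a::finite + 'b::finite) set) = (\<Sum>i\<in>UNIV. g (Inl i)) + (\<Sum>j\<in>UNIV. g (Inr j))"
  using sum.Plus[of "UNIV::'a set" "UNIV::'b set" g] by (simp add: o_def)

lemma base_pt_add_axis_Inl: "base_pt (p + t *\<^sub>R axis (Inl j) 1) = base_pt p + t *\<^sub>R axis j 1"
  by (simp add: base_pt_def vec_eq_iff axis_def)

lemma fiber_pt_add_axis_Inl: "fiber_pt (p + t *\<^sub>R axis (Inl j) 1) = fiber_pt p"
  by (simp add: fiber_pt_def vec_eq_iff axis_def)

lemma pd_Inl_comp_base_pt: "pd (Inl j) (\<lambda>q. \<phi> (base_pt q)) p = pd j \<phi> (base_pt p)"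
  unfolding pd_def by (simp add: base_pt_add_axis_Inl)

lemma warped_metric_Inl_Inl [simp]: "warped_metric f gF p $ Inl i $ Inl j = (if i = j then 1 else 0)"
  and warped_metric_Inl_Inr [simp]: "warped_metric f gF p $ Inl i $ Inr a = 0"
  and warped_metric_Inr_Inl [simp]: "warped_metric f gF p $ Inr a $ Inl i = 0"
  and warped_metric_Inr_Inr [simp]:
    "warped_metric f gF p $ Inr a $ Inr b = (f (base_pt p))\<^sup>2 * gF (fiber_pt p) $ a $ b"
  by (simp_all add: warped_metric_def)

lemma pd_warped_metric_Inl [simp]:
  "pd c (\<lambda>q. warped_metric f gF q $ Inl i $ y) = (\<lambda>q. 0)"
  "pd c (\<lambda>q. warped_metric f gF q $ y $ Inl i) = (\<lambda>q. 0)"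
  by (cases y; simp)+

lemma pd_Inl_warped_metric_Inr_Inr:
  assumes "f differentiable (at (base_pt p))"
  shows "pd (Inl i) (\<lambda>q. warped_metric f gF q $ Inr a $ Inr b) p
       = 2 * f (base_pt p) * pd i f (base_pt p) * gF (fiber_pt p) $ a $ b"
proof -
  have "((\<lambda>t. f (base_pt p + t *\<^sub>R axis i 1)) has_real_derivative pd i f (base_pt p)) (at 0)"
    using pd_axis_line_derivative[of f "base_pt p" 0 i] assms by simp
  then have "((\<lambda>t. (f (base_pt p + t *\<^sub>R axis i 1))\<^sup>2 * gF (fiber_pt p) $ a $ b) has_real_derivative
      2 * f (base_pt p) * pd i f (base_pt p) * gF (fiber_pt p) $ a $ b) (at 0)"
    by (auto intro!: derivative_eq_intros)
  then show ?thesis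
    unfolding pd_def by (simp add: base_pt_add_axis_Inl fiber_pt_add_axis_Inl DERIV_imp_deriv)
qed

lemma christoffel_warped_Inl_Inl [simp]: "christoffel (warped_metric f gF) k (Inl i) (Inl j) = (\<lambda>q. 0)"
  unfolding christoffel_def by (simp add: fun_eq_iff)

lemma warped_metric_mult_vec_eq_0:
  assumes gF: "riemannian_metric_on U gF" and q: "fiber_pt q \<in> U" and fq: "f (base_pt q) \<noteq> 0"
    and v: "warped_metric f gF q *v v = 0"
  shows "v = 0"
proof -
  let ?G = "gF (fiber_pt q)"
  define w where "w = (\<chi> b. v $ Inr b)"
  have "(warped_metric f gF q *v v) $ Inl i = v $ Inl i" for i
    by (simp add: matrix_vector_mult_def sum_UNIV_Plus mult_delta_left)
  then have base: "v $ Inl i = 0" for i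
    using v by simp
  have "(warped_metric f gF q *v v) $ Inr a = (f (base_pt q))\<^sup>2 * (?G *v w) $ a" for a
    by (simp add: matrix_vector_mult_def sum_UNIV_Plus w_def sum_distrib_left mult.assoc)
  then have "?G *v w = 0"
    using v fq by (simp add: vec_eq_iff)
  then have "w = 0"
    using gF q unfolding riemannian_metric_on_def by force
  then have fiber: "v $ Inr b = 0" for b
    unfolding w_def by (simp add: vec_eq_iff)
  show ?thesis
    unfolding vec_eq_iff by (metis base fiber sum.exhaust zero_index)
qed

lemma ginv_warped_metric:
  assumes "riemannian_metric_on U gF" and "fiber_pt q \<in> U" and "f (base_pt q) \<noteq> 0"
  shows "ginv (warped_metric f gF) q ** warped_metric f gF q = mat 1"
proof -
  have "invertible (warped_metric f gF q)"
    using warped_metric_mult_vec_eq_0[of U gF q f, OF assms] matrix_left_invertible_ker invertible_left_inverse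
    by blast
  then show ?thesis
    unfolding ginv_def matrix_inv_def invertible_def by (metis (mono_tags, lifting) someI_ex)
qed

lemma christoffel_warped_Inl_Inr:
  assumes gF: "riemannian_metric_on U gF" and q: "fiber_pt q \<in> U" and fq: "f (base_pt q) > 0"
    and df: "f differentiable (at (base_pt q))"
  shows "christoffel (warped_metric f gF) k (Inl i) (Inr b) q =
     pd i (\<lambda>x. ln (f x)) (base_pt q) * (if k = Inr b then 1 else 0)"
proof -
  let ?g = "warped_metric f gF"
  let ?c = "pd i (\<lambda>x. ln (f x)) (base_pt q)"
  have c: "?c = pd i f (base_pt q) / f (base_pt q)"
    using pd_ln[OF df fq] by (simp add: divide_inverse)
  have D: "pd (Inl i) (\<lambda>q. ?g q $ Inr b $ l) q = 2 * ?c * ?g q $ l $ Inr b" for l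
  proof (cases l)
    case (Inr c)
    have "gF (fiber_pt q) $ b $ c = gF (fiber_pt q) $ c $ b"
      using gF q unfolding riemannian_metric_on_def by blast
    with Inr show ?thesis
      using pd_Inl_warped_metric_Inr_Inr[OF df] fq
      by (simp add: c power2_eq_square field_simps)
  qed simp
  have "christoffel ?g k (Inl i) (Inr b) q = ?c * (\<Sum>l\<in>UNIV. ginv ?g q $ k $ l * ?g q $ l $ Inr b)"
    unfolding christoffel_def by (simp add: D sum_distrib_left algebra_simps)
  also have "(\<Sum>l\<in>UNIV. ginv ?g q $ k $ l * ?g q $ l $ Inr b) = (ginv ?g q ** ?g q) $ k $ Inr b"
    by (simp add: matrix_matrix_mult_def)
  also have "\<dots> = (if k = Inr b then 1 else 0)"
    using ginv_warped_metric[OF gF q] fq by (simp add: mat_def)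
  finally show ?thesis .
qed

lemma pd_Inl_christoffel_warped_Inr_Inl_Inr:
  fixes f :: "real^'n::finite \<Rightarrow> real" and gF :: "real^'m::finite \<Rightarrow> real^'m^'m"
  assumes gF: "riemannian_metric_on U gF" and p: "fiber_pt p \<in> U"
    and fpos: "\<And>x. f x > 0" and df: "\<And>x. f differentiable (at x)"
  shows "pd (Inl j) (christoffel (warped_metric f gF) (Inr a) (Inl i) (Inr a)) p
     = pd j (pd i (\<lambda>x. ln (f x))) (base_pt p)"
proof -
  have "pd (Inl j) (christoffel (warped_metric f gF) (Inr a) (Inl i) (Inr a)) p
      = pd (Inl j) (\<lambda>q. pd i (\<lambda>x. ln (f x)) (base_pt q)) p"
    using p christoffel_warped_Inl_Inr[OF gF _ fpos df]
    by (intro pd_cong_line) (simp add: fiber_pt_add_axis_Inl)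
  then show ?thesis
    by (simp add: pd_Inl_comp_base_pt)
qed

text \<open>This is \<open>Ric(\<partial>\<^sub>i, \<partial>\<^sub>j) = - (m / f) \<partial>\<^sub>i\<partial>\<^sub>j f\<close> for a warped product with flat base.\<close>

lemma ricci_warped_Inl_Inl:
  fixes f :: "real^'n::finite \<Rightarrow> real" and gF :: "real^'m::finite \<Rightarrow> real^'m^'m"
  assumes gF: "riemannian_metric_on U gF" and p: "fiber_pt p \<in> U"
    and fpos: "\<And>x. f x > 0" and df: "\<And>x. f differentiable (at x)"
  defines "\<phi> \<equiv> \<lambda>x. ln (f x)"
  shows "ricci (warped_metric f gF) (Inl i) (Inl j) p =
     - real CARD('m) * (pd j (pd i \<phi>) (base_pt p) + pd j \<phi> (base_pt p) * pd i \<phi> (base_pt p))"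
  unfolding ricci_def \<phi>_def
  by (simp add: sum_UNIV_Plus christoffel_warped_Inl_Inr[OF gF p fpos df]
      pd_Inl_christoffel_warped_Inr_Inl_Inr[OF gF p fpos df] sum.distrib sum_subtractf
      if_distrib algebra_simps cong: if_cong)

lemma hessian_warped_Inl_Inl:
  "hessian (warped_metric f gF) (\<lambda>p. h (base_pt p)) (Inl i) (Inl j) p = pd i (pd j h) (base_pt p)"
proof -
  have pd_h: "pd (Inl j) (\<lambda>p. h (base_pt p)) = (\<lambda>q. pd j h (base_pt q))"
    by (simp add: fun_eq_iff pd_Inl_comp_base_pt)
  show ?thesis
    unfolding hessian_def pd_h by (simp add: pd_Inl_comp_base_pt)
qed

lemma soliton_equation_horizontal:
  fixes f h :: "real^'n::finite \<Rightarrow> real" and gF :: "real^'m::finite \<Rightarrow> real^'m^'m"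
  assumes "U \<noteq> {}" and gF: "riemannian_metric_on U gF"
    and fpos: "\<And>x. f x > 0" and df: "\<And>x. f differentiable (at x)"
    and soliton: "gradient_ricci_soliton_on {p. fiber_pt p \<in> U}
                    (warped_metric f gF) (\<lambda>p. h (base_pt p)) \<rho>"
  defines "\<phi> \<equiv> \<lambda>x. ln (f x)"
  shows "pd i (pd j h) x - real CARD('m) * (pd j (pd i \<phi>) x + pd j \<phi> x * pd i \<phi> x)
     = \<rho> * (if i = j then 1 else 0)"
proof -
  obtain y where y: "y \<in> U"
    using \<open>U \<noteq> {}\<close> by blast
  define p :: "real^('n+'m)" where "p = (\<chi> c. case c of Inl i \<Rightarrow> x $ i | Inr a \<Rightarrow> y $ a)"
  have "base_pt p = x" "fiber_pt p = y"
    by (simp_all add: p_def base_pt_def fiber_pt_def vec_eq_iff)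
  with soliton y
  have "ricci (warped_metric f gF) (Inl i) (Inl j) p
      + hessian (warped_metric f gF) (\<lambda>p. h (base_pt p)) (Inl i) (Inl j) p
     = \<rho> * warped_metric f gF p $ Inl i $ Inl j"
    unfolding gradient_ricci_soliton_on_def by blast
  with \<open>base_pt p = x\<close> \<open>fiber_pt p = y\<close> y show ?thesis
    unfolding \<phi>_def
    by (simp add: ricci_warped_Inl_Inl[OF gF _ fpos df] hessian_warped_Inl_Inl)
qed

section \<open>Hessians of rank one\<close>

definition grad :: "(real^'i::finite \<Rightarrow> real) \<Rightarrow> real^'i \<Rightarrow> real^'i" where
  "grad \<phi> x = (\<chi> k. pd k \<phi> x)"

definition hess_matrix :: "(real^'i::finite \<Rightarrow> real) \<Rightarrow> real^'i \<Rightarrow> real^'i^'i" where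
  "hess_matrix \<phi> x = (\<chi> i k. pd k (pd i \<phi>) x)"

lemma rank_one_hessian_of_soliton_equation:
  fixes \<phi> h :: "real^'n::finite \<Rightarrow> real"
  assumes \<phi>: "smooth_on UNIV \<phi>" and h: "smooth_on UNIV h" and "m \<noteq> 0"
    and eq: "\<And>i j x. pd i (pd j h) x - m * (pd j (pd i \<phi>) x + pd j \<phi> x * pd i \<phi> x) = c i j"
  shows "pd k (pd i \<phi>) x * pd j \<phi> x = pd j (pd i \<phi>) x * pd k \<phi> x"
proof -
  have diff: "\<And>\<psi> x. smooth_on UNIV \<psi> \<Longrightarrow> \<psi> differentiable (at x)"
    by (rule smooth_on_imp_differentiable) auto
  have third_order: "pd k' (pd i' (pd j' h)) x
      - m * (pd k' (pd j' (pd i' \<phi>)) x + (pd j' \<phi> x * pd k' (pd i' \<phi>) x + pd k' (pd j' \<phi>) x * pd i' \<phi> x)) = 0"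
    for i' j' k'
  proof -
    have "(\<lambda>x. pd i' (pd j' h) x - m * (pd j' (pd i' \<phi>) x + pd j' \<phi> x * pd i' \<phi> x)) = (\<lambda>x. c i' j')"
      using eq by (simp add: fun_eq_iff)
    then have "0 = pd k' (\<lambda>x. pd i' (pd j' h) x - m * (pd j' (pd i' \<phi>) x + pd j' \<phi> x * pd i' \<phi> x)) x"
      by simp
    also have "\<dots> = pd k' (pd i' (pd j' h)) x
      - m * (pd k' (pd j' (pd i' \<phi>)) x + (pd j' \<phi> x * pd k' (pd i' \<phi>) x + pd k' (pd j' \<phi>) x * pd i' \<phi> x))"
      using \<phi> h
      by (simp add: pd_diff pd_cmult pd_add pd_mult diff smooth_on_pd differentiable_add differentiable_mult
          differentiable_cmult_left_iff)
    finally show ?thesis by simp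
  qed
  have "pd j (pd i (pd k h)) = pd k (pd i (pd j h))"
    using h smooth_on_pd_commute smooth_on_pd by metis
  moreover have "pd j (pd k (pd i \<phi>)) = pd k (pd j (pd i \<phi>))" "pd j (pd k \<phi>) = pd k (pd j \<phi>)"
    using \<phi> smooth_on_pd_commute smooth_on_pd by metis+
  ultimately have third_order': "pd k (pd i (pd j h)) x
      - m * (pd k (pd j (pd i \<phi>)) x + (pd k \<phi> x * pd j (pd i \<phi>) x + pd k (pd j \<phi>) x * pd i \<phi> x)) = 0"
    using third_order[of j i k] by simp
  have "m * (pd k (pd i \<phi>) x * pd j \<phi> x - pd j (pd i \<phi>) x * pd k \<phi> x)
    = (pd k (pd i (pd j h)) x
      - m * (pd k (pd j (pd i \<phi>)) x + (pd k \<phi> x * pd j (pd i \<phi>) x + pd k (pd j \<phi>) x * pd i \<phi> x)))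
    - (pd k (pd i (pd j h)) x
      - m * (pd k (pd j (pd i \<phi>)) x + (pd j \<phi> x * pd k (pd i \<phi>) x + pd k (pd j \<phi>) x * pd i \<phi> x)))"
    by (simp add: algebra_simps)
  also have "\<dots> = 0"
    using third_order[of k i j] third_order' by simp
  finally show ?thesis
    using \<open>m \<noteq> 0\<close> by simp
qed

lemma rank_one_matrix_identity:
  fixes G u w :: "real^'n::finite" and A :: "real^'n^'n"
  assumes rank: "\<And>i j k. A$i$k * G$j = A$i$j * G$k"
  shows "(G \<bullet> u) *\<^sub>R (A *v w) = (G \<bullet> w) *\<^sub>R (A *v u)"
proof (subst vec_eq_iff, intro allI)
  fix i
  have "(G \<bullet> u) * (\<Sum>k\<in>UNIV. A$i$k * w$k) = (\<Sum>j\<in>UNIV. \<Sum>k\<in>UNIV. (A$i$k * G$j) * (w$k * u$j))"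
    unfolding inner_vec_def inner_real_def sum_product by (simp add: mult_ac)
  also have "\<dots> = (\<Sum>j\<in>UNIV. \<Sum>k\<in>UNIV. (A$i$j * G$k) * (w$k * u$j))"
    by (simp only: rank)
  also have "\<dots> = (G \<bullet> w) * (\<Sum>j\<in>UNIV. A$i$j * u$j)"
    unfolding inner_vec_def inner_real_def sum_product by (subst sum.swap) (simp add: mult_ac)
  finally show "((G \<bullet> u) *\<^sub>R (A *v w)) $ i = ((G \<bullet> w) *\<^sub>R (A *v u)) $ i"
    by (simp add: matrix_vector_mult_def)
qed

lemma continuous_on_grad: "smooth_on UNIV \<phi> \<Longrightarrow> continuous_on UNIV (grad \<phi>)"
  unfolding grad_def by (intro continuous_on_vec_lambda smooth_on_imp_continuous_on smooth_on_pd)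

lemma grad_has_vector_derivative_along_line:
  fixes \<phi> :: "real^'n::finite \<Rightarrow> real"
  assumes "smooth_on UNIV \<phi>"
  shows "((\<lambda>s. grad \<phi> (x + s *\<^sub>R w)) has_vector_derivative hess_matrix \<phi> (x + s *\<^sub>R w) *v w) (at s)"
  unfolding has_vector_derivative_def
proof (subst has_derivative_componentwise_within, intro ballI)
  fix b :: "real^'n" assume "b \<in> Basis"
  then obtain i where b: "b = axis i 1"
    by (auto simp: Basis_vec_def)
  have "((\<lambda>s. pd i \<phi> (x + s *\<^sub>R w)) has_real_derivative (hess_matrix \<phi> (x + s *\<^sub>R w) *v w) $ i) (at s)"
    using pd_line_derivative[OF smooth_on_imp_differentiable[OF smooth_on_pd[OF assms] UNIV_I]]
    by (simp add: hess_matrix_def matrix_vector_mult_def mult.commute)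
  then show "((\<lambda>s. grad \<phi> (x + s *\<^sub>R w) \<bullet> b) has_derivative
      (\<lambda>t. (t *\<^sub>R (hess_matrix \<phi> (x + s *\<^sub>R w) *v w)) \<bullet> b)) (at s)"
    by (simp add: b grad_def inner_axis has_real_derivative_iff_has_vector_derivative
        has_vector_derivative_def)
qed

lemma has_real_derivative_inner:
  fixes u v :: "real \<Rightarrow> 'a::real_inner"
  assumes "(u has_vector_derivative u') (at t)" "(v has_vector_derivative v') (at t)"
  shows "((\<lambda>t. u t \<bullet> v t) has_real_derivative u t \<bullet> v' + u' \<bullet> v t) (at t)"
proof -
  have "(\<lambda>h. u t \<bullet> (h *\<^sub>R v') + (h *\<^sub>R u') \<bullet> v t) = (*) (u t \<bullet> v' + u' \<bullet> v t)"
    by (simp add: fun_eq_iff algebra_simps)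
  with has_derivative_inner[OF assms[unfolded has_vector_derivative_def]] show ?thesis
    unfolding has_field_derivative_def by simp
qed

lemma grad_locally_const_along_orthogonal_line:
  fixes \<phi> :: "real^'n::finite \<Rightarrow> real"
  assumes \<phi>: "smooth_on UNIV \<phi>"
    and rank: "\<And>x i j k. pd k (pd i \<phi>) x * pd j \<phi> x = pd j (pd i \<phi>) x * pd k \<phi> x"
    and nz: "grad \<phi> y \<noteq> 0" and orth: "grad \<phi> y \<bullet> w = 0"
  shows "\<exists>e>0. \<forall>t\<in>ball 0 e. grad \<phi> (y + t *\<^sub>R w) = grad \<phi> y"
proof -
  define u where "u t = grad \<phi> (y + t *\<^sub>R w)" for t
  define H where "H t = hess_matrix \<phi> (y + t *\<^sub>R w)" for t
  have u': "(u has_vector_derivative H t *v w) (at t)" for t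
    unfolding u_def H_def by (rule grad_has_vector_derivative_along_line[OF \<phi>])
  have rank_t: "(u t \<bullet> u t) *\<^sub>R (H t *v w) = (u t \<bullet> w) *\<^sub>R (H t *v u t)" for t
    by (rule rank_one_matrix_identity) (use rank in \<open>simp add: u_def H_def grad_def hess_matrix_def\<close>)
  have symm: "(H t *v u t) \<bullet> w = u t \<bullet> (H t *v w)" for t
  proof -
    have "transpose (H t) = H t"
      using smooth_on_pd_commute[OF \<phi>] by (simp add: H_def hess_matrix_def transpose_def vec_eq_iff)
    then show ?thesis
      by (metis dot_lmul_matrix inner_commute transpose_matrix_vector)
  qed
  have "continuous (at 0) u"
    using u' by (intro differentiable_imp_continuous_within differentiableI_vector)
  then obtain e where "e > 0" and u_nz: "\<And>t. t \<in> ball 0 e \<Longrightarrow> u t \<noteq> 0"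
    using continuous_at_avoid[of 0 u 0] nz by (auto simp: u_def)
  \<comment> \<open>The squared cosine of the angle between \<open>u\<close> and \<open>w\<close> is constant because of \<open>rank_t\<close>.\<close>
  define r where "r t = (u t \<bullet> w)\<^sup>2 / (u t \<bullet> u t)" for t
  have r': "(r has_real_derivative 0) (at t within ball 0 e)" if "t \<in> ball 0 e" for t
  proof -
    let ?a = "u t \<bullet> w" and ?q = "u t \<bullet> u t"
    have a': "((\<lambda>t. u t \<bullet> w) has_real_derivative (H t *v w) \<bullet> w) (at t)"
      using has_real_derivative_inner[OF u'[of t] has_vector_derivative_const[of w "at t"]] by simp
    have q': "((\<lambda>t. u t \<bullet> u t) has_real_derivative 2 * (u t \<bullet> (H t *v w))) (at t)"
      using has_real_derivative_inner[OF u'[of t] u'[of t]] by (simp add: inner_commute)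
    have key: "((H t *v w) \<bullet> w) * ?q = ?a * (u t \<bullet> (H t *v w))"
      using arg_cong[OF rank_t, of "\<lambda>v. v \<bullet> w"] symm by (simp add: mult.commute)
    have "of_nat 2 * (((H t *v w) \<bullet> w) * ?a ^ (2 - Suc 0)) * ?q = 2 * ?a * (((H t *v w) \<bullet> w) * ?q)"
      by (simp add: mult_ac)
    also have "\<dots> = ?a\<^sup>2 * (2 * (u t \<bullet> (H t *v w)))"
      unfolding key by (simp add: power2_eq_square mult_ac)
    finally have num: "of_nat 2 * (((H t *v w) \<bullet> w) * ?a ^ (2 - Suc 0)) * ?q
        - ?a\<^sup>2 * (2 * (u t \<bullet> (H t *v w))) = 0"
      by simp
    have deriv: "(r has_real_derivative
        (of_nat 2 * (((H t *v w) \<bullet> w) * ?a ^ (2 - Suc 0)) * ?q - ?a\<^sup>2 * (2 * (u t \<bullet> (H t *v w)))) / (?q * ?q)) (at t)"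
      unfolding r_def by (rule DERIV_divide[OF DERIV_power[OF a'] q']) (use u_nz[OF that] in simp)
    show ?thesis
      by (rule has_field_derivative_at_within) (use deriv[unfolded num] in simp)
  qed
  obtain c where "\<forall>t\<in>ball 0 e. r t = c"
    using has_field_derivative_zero_constant[OF convex_ball r'] by blast
  moreover have "r 0 = 0"
    using orth by (simp add: r_def u_def)
  ultimately have r0: "r t = 0" if "t \<in> ball 0 e" for t
    using that \<open>e > 0\<close> by force
  have uw: "u t \<bullet> w = 0" if "t \<in> ball 0 e" for t
    using r0[OF that] u_nz[OF that] by (simp add: r_def)
  have u'0: "(u has_vector_derivative 0) (at t within ball 0 e)" if "t \<in> ball 0 e" for t
  proof (rule has_vector_derivative_at_within)
    have "H t *v w = 0"
      using rank_t[of t] uw[OF that] u_nz[OF that] by simp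
    with u'[of t] show "(u has_vector_derivative 0) (at t)"
      by simp
  qed
  obtain v where v: "\<And>t. t \<in> ball 0 e \<Longrightarrow> u t = v"
    using has_vector_derivative_zero_constant[OF convex_ball u'0] by metis
  have "u t = u 0" if "t \<in> ball 0 e" for t
    using v[OF that] v[of 0] \<open>e > 0\<close> by simp
  then show ?thesis
    using \<open>e > 0\<close> unfolding u_def by auto
qed

lemma grad_const_along_orthogonal_line:
  fixes \<phi> :: "real^'n::finite \<Rightarrow> real"
  assumes \<phi>: "smooth_on UNIV \<phi>"
    and rank: "\<And>x i j k. pd k (pd i \<phi>) x * pd j \<phi> x = pd j (pd i \<phi>) x * pd k \<phi> x"
    and nz: "grad \<phi> x \<noteq> 0" and orth: "grad \<phi> x \<bullet> w = 0"
  shows "grad \<phi> (x + s *\<^sub>R w) = grad \<phi> x"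
proof -
  define T where "T = {s. grad \<phi> (x + s *\<^sub>R w) = grad \<phi> x}"
  have "continuous_on UNIV (\<lambda>s. grad \<phi> (x + s *\<^sub>R w))"
    by (rule continuous_on_compose2[OF continuous_on_grad[OF \<phi>]]) (auto intro!: continuous_intros)
  then have "closed T"
    unfolding T_def by (intro closed_Collect_eq continuous_on_const)
  moreover have "open T"
    unfolding open_contains_ball
  proof
    fix s assume "s \<in> T"
    then have "grad \<phi> (x + s *\<^sub>R w) \<noteq> 0" "grad \<phi> (x + s *\<^sub>R w) \<bullet> w = 0"
      using nz orth by (simp_all add: T_def)
    then obtain e where "e > 0"
      and e: "\<forall>t\<in>ball 0 e. grad \<phi> (x + s *\<^sub>R w + t *\<^sub>R w) = grad \<phi> (x + s *\<^sub>R w)"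
      using grad_locally_const_along_orthogonal_line[OF \<phi> rank] by blast
    have "ball s e \<subseteq> T"
    proof
      fix r assume "r \<in> ball s e"
      then have "r - s \<in> ball 0 e"
        by (simp add: dist_norm)
      with e have "grad \<phi> (x + s *\<^sub>R w + (r - s) *\<^sub>R w) = grad \<phi> (x + s *\<^sub>R w)"
        by blast
      moreover have "x + s *\<^sub>R w + (r - s) *\<^sub>R w = x + r *\<^sub>R w"
        by (simp add: algebra_simps)
      ultimately show "r \<in> T"
        using \<open>s \<in> T\<close> by (simp add: T_def)
    qed
    with \<open>e > 0\<close> show "\<exists>e>0. ball s e \<subseteq> T"
      by blast
  qed
  moreover have "0 \<in> T"
    by (simp add: T_def)
  ultimately have "T = UNIV"
    using clopen by blast
  then have "s \<in> T"
    by simp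
  then show ?thesis
    by (simp add: T_def)
qed

lemma grads_parallel_to_fixed_vector:
  fixes \<phi> :: "real^'n::finite \<Rightarrow> real"
  assumes \<phi>: "smooth_on UNIV \<phi>"
    and rank: "\<And>x i j k. pd k (pd i \<phi>) x * pd j \<phi> x = pd j (pd i \<phi>) x * pd k \<phi> x"
  shows "\<exists>\<nu>. \<forall>x w. \<nu> \<bullet> w = 0 \<longrightarrow> grad \<phi> x \<bullet> w = 0"
proof (cases "\<forall>x. grad \<phi> x = 0")
  case False
  then obtain x0 where x0: "grad \<phi> x0 \<noteq> 0"
    by blast
  have "grad \<phi> x \<bullet> w = 0" if w: "grad \<phi> x0 \<bullet> w = 0" for x w
  proof (rule ccontr)
    assume bw: "grad \<phi> x \<bullet> w \<noteq> 0"
    \<comment> \<open>The line through \<open>x0\<close> in direction \<open>w\<close> meets the hyperplane through \<open>x\<close> orthogonal to \<open>grad \<phi> x\<close>.\<close>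
    define z where "z = x0 + (grad \<phi> x \<bullet> (x - x0) / (grad \<phi> x \<bullet> w)) *\<^sub>R w"
    have "grad \<phi> z = grad \<phi> x0"
      unfolding z_def by (rule grad_const_along_orthogonal_line[OF \<phi> rank x0 w])
    moreover have "grad \<phi> x \<bullet> (z - x) = 0"
      using bw by (simp add: z_def inner_diff_right inner_add_right)
    then have "grad \<phi> (x + 1 *\<^sub>R (z - x)) = grad \<phi> x"
      using bw by (intro grad_const_along_orthogonal_line[OF \<phi> rank]) auto
    ultimately show False
      using w bw by simp
  qed
  then show ?thesis
    by blast
qed auto

lemma eq_at_orthogonal_projection:
  fixes f :: "real^'n::finite \<Rightarrow> real"
  assumes df: "\<And>x. f differentiable (at x)"
    and orth: "\<And>x w. \<nu> \<bullet> w = 0 \<Longrightarrow> grad f x \<bullet> w = 0"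
  shows "f x = f ((\<nu> \<bullet> x / (\<nu> \<bullet> \<nu>)) *\<^sub>R \<nu>)"
proof -
  define y where "y = (\<nu> \<bullet> x / (\<nu> \<bullet> \<nu>)) *\<^sub>R \<nu>"
  have "\<nu> \<bullet> (x - y) = 0"
    by (cases "\<nu> = 0") (simp_all add: y_def inner_diff_right)
  then have "((\<lambda>s. f (y + s *\<^sub>R (x - y))) has_real_derivative 0) (at s)" for s
    using pd_line_derivative[of f y s "x - y", OF df] orth[of "x - y" "y + s *\<^sub>R (x - y)"]
    by (simp add: grad_def inner_vec_def mult.commute)
  then have "f (y + 1 *\<^sub>R (x - y)) = f (y + 0 *\<^sub>R (x - y))"
    by (intro DERIV_isconst_all) auto
  then show ?thesis
    by (simp add: y_def)
qed

lemma C1_differentiable_on_line: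
  fixes f :: "real^'n::finite \<Rightarrow> real"
  assumes "Ck_on 1 UNIV f"
  shows "(\<lambda>t. f (x + t *\<^sub>R d)) C1_differentiable_on UNIV"
  unfolding C1_differentiable_on_def
proof (intro exI[of _ "\<lambda>t. \<Sum>k\<in>UNIV. d$k * pd k f (x + t *\<^sub>R d)"] conjI ballI)
  fix t :: real
  show "((\<lambda>t. f (x + t *\<^sub>R d)) has_vector_derivative (\<Sum>k\<in>UNIV. d$k * pd k f (x + t *\<^sub>R d))) (at t)"
    using assms pd_line_derivative[of f x t d]
    by (simp add: has_real_derivative_iff_has_vector_derivative[symmetric])
  have "continuous_on UNIV (pd k f)" for k
    using assms by simp
  then have "continuous_on UNIV (\<lambda>t. pd k f (x + t *\<^sub>R d))" for k
    by (rule continuous_on_compose2) (auto intro!: continuous_intros)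
  then show "continuous_on UNIV (\<lambda>t. \<Sum>k\<in>UNIV. d$k * pd k f (x + t *\<^sub>R d))"
    by (intro continuous_on_sum continuous_on_mult_left)
qed

theorem theorem1:
  fixes f h :: "real^'n::finite \<Rightarrow> real"
    and U :: "(real^'m::finite) set"
    and gF :: "real^'m \<Rightarrow> real^'m^'m"
    and \<rho> :: real
  assumes n2: "CARD('n) \<ge> 2"
    and U: "open U" "U \<noteq> {}"
    and gF: "riemannian_metric_on U gF"
    and f_smooth: "smooth_on UNIV f" and f_pos: "\<forall>x. f x > 0"
    and h_smooth: "smooth_on UNIV h"
    and soliton: "gradient_ricci_soliton_on {p. fiber_pt p \<in> U}
                    (warped_metric f gF) (\<lambda>p. h (base_pt p)) \<rho>"
  shows "\<exists>a b :: real^'n. \<exists>P :: real \<Rightarrow> real.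
           P C1_differentiable_on UNIV \<and>
           (\<forall>x. f x = P (\<Sum>i\<in>UNIV. a $ i * x $ i + b $ i))"
proof -
  define \<phi> where "\<phi> = (\<lambda>x. ln (f x))"
  have f_pos': "\<And>x. f x > 0" and df: "\<And>x. f differentiable (at x)"
    using f_pos smooth_on_imp_differentiable[OF f_smooth] by auto
  have \<phi>: "smooth_on UNIV \<phi>"
    unfolding \<phi>_def using f_smooth f_pos' by (rule smooth_on_ln)
  have rank: "pd k (pd i \<phi>) x * pd j \<phi> x = pd j (pd i \<phi>) x * pd k \<phi> x" for x i j k
    using rank_one_hessian_of_soliton_equation[OF \<phi> h_smooth, of "real CARD('m)"]
      soliton_equation_horizontal[OF U(2) gF f_pos' df soliton] unfolding \<phi>_def by simp
  obtain \<nu> where \<nu>: "\<And>x w. \<nu> \<bullet> w = 0 \<Longrightarrow> grad \<phi> x \<bullet> w = 0"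
    using grads_parallel_to_fixed_vector[OF \<phi> rank] by blast
  have "grad f x = f x *\<^sub>R grad \<phi> x" for x
    using f_pos'[of x] by (simp add: grad_def \<phi>_def pd_ln[OF df] vec_eq_iff)
  then have "f x = f ((\<nu> \<bullet> x / (\<nu> \<bullet> \<nu>)) *\<^sub>R \<nu>)" for x
    using \<nu> by (intro eq_at_orthogonal_projection df) simp
  moreover have "(\<lambda>t. f (0 + t *\<^sub>R ((1 / (\<nu> \<bullet> \<nu>)) *\<^sub>R \<nu>))) C1_differentiable_on UNIV"
    using f_smooth unfolding smooth_on_def by (intro C1_differentiable_on_line) blast
  ultimately show ?thesis
    by (intro exI[of _ \<nu>] exI[of _ 0] exI[of _ "\<lambda>t. f (0 + t *\<^sub>R ((1 / (\<nu> \<bullet> \<nu>)) *\<^sub>R \<nu>))"])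
      (simp add: inner_vec_def)
qed

end
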